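(* For Pólya trees $t$ let $S_t$, $T$ be as in the context. Then \[ \sum_{\substack{t \in \mathcal{P}_{\le n}\\ |t| \ge \log n}} \left(1 - \frac{[z^n]S_t(z)}{[z^n]T(z)}\right) = \mathcal{O}\!\left(\frac{n}{\log n}\right) \quad \text{as } n\to\infty, \] where $\log$ denotes the logarithm to base $1/\sigma$.
   Context: A recursive tree of size $n$ is a rooted non-plane tree with $n$ nodes labeled $1,\dots,n$ with labels increasing along every path from the root; their exponential generating function is $T(z)=\ln\frac{1}{1-z}$, so $[z^n]T(z)=1/n$. A Pólya tree is an unlabeled rooted non-plane tree; $\mathcal{P}_{\le n}$ is the set of Pólya trees with at most $n$ nodes; $\sigma\approx 0.338$ is the radius of convergence of the ordinary generating function of Pólya trees. A fringe subtree is a node together with all its descendants; its shape is the Pólya tree obtained by forgetting labels. For a Pólya tree $t$ with $k$ nodes, $\ell(t)$ is the number of increasing labelings of $t$ by $1,\dots,k$, $w(t)=\ell(t)/k!$ and $P_t(z)=w(t)z^k$. $S_t(z)$ is the exponential generating function of recursive trees having no fringe subtree of shape $t$; it is the solution of $S_t'(z)=\exp(S_t(z))-P_t'(z)$, $S_t(0)=0$, explicitly $S_t(z)=\ln\frac{1}{1-\int_0^z e^{-P_t(v)}\,dv}-P_t(z)$. *)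

theory Defs
  imports "HOL-Analysis.Analysis" "HOL-Library.Multiset" "HOL-Library.Landau_Symbols"
begin

datatype ptree = PNode "ptree multiset"

primrec psize :: "ptree \<Rightarrow> nat" where
  "psize (PNode M) = Suc (sum_mset (image_mset psize M))"

definition polya_sigma :: real where
  "polya_sigma = real_of_ereal (conv_radius (\<lambda>n. real (card {t. psize t = n})))"

datatype ltree = LNode nat "ltree multiset"

primrec lroot :: "ltree \<Rightarrow> nat" where
  "lroot (LNode a M) = a"

primrec lsize :: "ltree \<Rightarrow> nat" where
  "lsize (LNode a M) = Suc (sum_mset (image_mset lsize M))"

primrec labels :: "ltree \<Rightarrow> nat set" where
  "labels (LNode a M) = insert a (\<Union> (set_mset (image_mset labels M)))"

primrec shape :: "ltree \<Rightarrow> ptree" where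
  "shape (LNode a M) = PNode (image_mset shape M)"

inductive increasing :: "ltree \<Rightarrow> bool" where
  "(\<And>c. c \<in># M \<Longrightarrow> a < lroot c \<and> increasing c) \<Longrightarrow> increasing (LNode a M)"

inductive fringe :: "ltree \<Rightarrow> ltree \<Rightarrow> bool" where
  fringe_refl: "fringe r r"
| fringe_child: "c \<in># M \<Longrightarrow> fringe c s \<Longrightarrow> fringe (LNode a M) s"

definition rec_trees :: "nat \<Rightarrow> ltree set" where
  "rec_trees n = {r. lsize r = n \<and> labels r = {1..n} \<and> increasing r}"

definition T_coeff :: "nat \<Rightarrow> real" where
  "T_coeff n = real (card (rec_trees n)) / fact n"

definition S_coeff :: "ptree \<Rightarrow> nat \<Rightarrow> real" where
  "S_coeff t n = real (card {r \<in> rec_trees n. \<not> (\<exists>s. fringe r s \<and> shape s = t)}) / fact n"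

end

theory Submission
  imports Defs
begin

text \<open>
  The quantity 1 - [z^n] S_t / [z^n] T is the probability that a uniformly random recursive tree
  of size n has a fringe subtree of shape t. Summed over all shapes of size at least L it is
  therefore at most the expected number of fringe subtrees of size at least L. A recursive tree
  of size n + 1 arises from one of size n by attaching the leaf n + 1 below one of the n nodes;
  this gives a recurrence for the expected number of fringe subtrees of size m, whose solution is
  n / (m (m + 1)) for m < n and 1 for m = n, so that the tail from L to n sums to n / L.
  Choosing L = ceiling (log n) yields the bound n / log n.
\<close>

lemma count_sum_mset: "count (\<Sum>\<^sub># MM) y = (\<Sum>N\<in>#MM. count N y)"
  by (induction MM) auto

lemma replicate_mset_add: "replicate_mset (m + n) x = replicate_mset m x + replicate_mset n x"
  by (rule multiset_eqI) simp

lemma subset_mset_set_eq_mset_set: "M \<subseteq># mset_set A \<Longrightarrow> M = mset_set (set_mset M)"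
proof (rule multiset_eqI)
  fix x
  assume "M \<subseteq># mset_set A"
  then have "count M x \<le> count (mset_set A) x"
    by (rule mset_subset_eq_count)
  also have "\<dots> \<le> 1"
    by (simp add: count_mset_set')
  finally have "count M x \<le> 1" .
  then show "count M x = count (mset_set (set_mset M)) x"
    by (metis count_greater_eq_one_iff count_mset_set(1,3) finite_set_mset le_antisym not_in_iff)
qed

lemma count_le_1_add_mset_union:
  assumes "\<forall>y. count (add_mset a (A + B)) y \<le> 1"
  shows "a \<notin># A" and "a \<notin># B" and "\<forall>y\<in>#A. y \<notin># B" and "\<forall>y. count A y \<le> 1"
proof -
  have le: "count A y + count B y + of_bool (y = a) \<le> 1" for y
    using spec[OF assms, of y] by (auto split: if_splits)
  show "a \<notin># A" and "a \<notin># B"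
    using le[of a] by (simp_all add: not_in_iff)
  show "\<forall>y\<in>#A. y \<notin># B"
  proof
    fix y assume "y \<in># A"
    then have "count A y \<ge> 1"
      by simp
    with le[of y] have "count B y = 0"
      by linarith
    then show "y \<notin># B"
      by (simp add: not_in_iff)
  qed
  show "\<forall>y. count A y \<le> 1"
    using le by (metis add_leD1)
qed

lemma sum_of_bool_shift:
  fixes f :: "nat \<Rightarrow> real"
  assumes "finite J" and "A \<subseteq> J"
  shows "(\<Sum>j\<in>J. f (k + of_bool (j \<in> A))) = card A * f (k + 1) + (real (card J) - card A) * f k"
proof -
  have "(\<Sum>j\<in>J. f (k + of_bool (j \<in> A))) = (\<Sum>j\<in>J. if j \<in> A then f (k + 1) else f k)"
    by (rule sum.cong) simp_all
  also have "\<dots> = (\<Sum>j\<in>J \<inter> A. f (k + 1)) + (\<Sum>j\<in>J - A. f k)"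
    using assms(1) by (simp add: sum.If_cases Diff_eq)
  also have "\<dots> = card A * f (k + 1) + (real (card J) - card A) * f k"
    using assms by (simp add: Int_absorb1 card_Diff_subset finite_subset card_mono)
  finally show ?thesis .
qed

lemma sum_sum_mset_swap: "(\<Sum>j\<in>J. \<Sum>x\<in>#M. f j x) = (\<Sum>x\<in>#M. \<Sum>j\<in>J. f j x)"
  by (induction M) (simp_all add: sum.distrib)

lemma card_set_mset_le_size: "card (set_mset M) \<le> size M"
  by (induction M) (simp_all add: card_insert_if)

lemma of_nat_size_filter_mset: "of_nat (size {#x \<in># M. P x#}) = (\<Sum>x\<in>#M. of_bool (P x))"
  by (induction M) simp_all

definition list_of_mset :: "'a multiset \<Rightarrow> 'a list" where
  "list_of_mset M = (SOME xs. mset xs = M)"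

lemma mset_list_of_mset [simp]: "mset (list_of_mset M) = M"
  unfolding list_of_mset_def by (rule someI_ex) (rule ex_mset)

lemma concat_code_words_eq:
  assumes "\<forall>u\<in>set us. \<forall>v\<in>C. \<forall>r r'. u @ r = v @ r' \<longrightarrow> u = v \<and> r = r'"
    and "set us \<subseteq> C" and "set vs \<subseteq> C" and "\<forall>v\<in>C. \<exists>w. v = True # w"
    and "concat us @ False # r = concat vs @ False # r'"
  shows "us = vs \<and> r = r'"
  using assms
proof (induction us arbitrary: vs)
  case Nil
  show ?case
  proof (cases vs)
    case (Cons v vs')
    with Nil.prems(3,4) obtain w where "v = True # w"
      by auto
    with Nil.prems(5) Cons show ?thesis
      by simp
  qed (use Nil.prems(5) in simp)
next
  case (Cons u us)
  from Cons.prems(2,4) obtain w where u: "u = True # w"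
    by auto
  from Cons.prems(5) u obtain v vs' where vs: "vs = v # vs'"
    by (cases vs) auto
  have "v \<in> C"
    using Cons.prems(3) vs by simp
  with Cons.prems(1) have "\<forall>r r'. u @ r = v @ r' \<longrightarrow> u = v \<and> r = r'"
    by simp
  moreover have "u @ (concat us @ False # r) = v @ (concat vs' @ False # r')"
    using Cons.prems(5) vs by simp
  ultimately have "u = v" and rest: "concat us @ False # r = concat vs' @ False # r'"
    by blast+
  have "set us \<subseteq> C" and "set vs' \<subseteq> C"
    using Cons.prems(2,3) vs by simp_all
  then have "us = vs' \<and> r = r'"
    using Cons.IH[OF _ _ _ Cons.prems(4) rest] Cons.prems(1) by (meson list.set_intros(2))
  with \<open>u = v\<close> vs show ?case
    by simp
qed

lemma card_bool_lists: "card {xs :: bool list. length xs = n} = 2 ^ n"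
  using card_lists_length_eq[of "UNIV :: bool set" n] by simp

primrec label_mset :: "ltree \<Rightarrow> nat multiset" where
  "label_mset (LNode a M) = add_mset a (\<Sum>c\<in>#M. label_mset c)"

primrec fringe_mset :: "ltree \<Rightarrow> ltree multiset" where
  "fringe_mset (LNode a M) = add_mset (LNode a M) (\<Sum>c\<in>#M. fringe_mset c)"

lemma size_label_mset: "size (label_mset t) = lsize t"
  by (induction t) (auto simp: multiset.map_comp o_def intro!: arg_cong[where f = sum_mset] image_mset_cong)

lemma set_label_mset: "set_mset (label_mset t) = labels t"
  by (induction t) auto

lemma lroot_in_label_mset: "lroot t \<in># label_mset t"
  by (cases t) auto

lemma self_in_fringe_mset: "t \<in># fringe_mset t"
  by (cases t) auto

lemma fringe_iff_in_fringe_mset: "fringe r s \<longleftrightarrow> s \<in># fringe_mset r"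
proof
  show "fringe r s \<Longrightarrow> s \<in># fringe_mset r"
    by (induction rule: fringe.induct) (auto simp: self_in_fringe_mset)
  show "s \<in># fringe_mset r \<Longrightarrow> fringe r s"
    by (induction r) (auto intro: fringe.intros)
qed

lemma label_mset_fringe_subset: "s \<in># fringe_mset r \<Longrightarrow> label_mset s \<subseteq># label_mset r"
proof (induction r)
  case (LNode a M)
  show ?case
  proof (cases "s = LNode a M")
    case False
    then obtain c where c: "c \<in># M" "s \<in># fringe_mset c"
      using LNode.prems by auto
    have "label_mset s \<subseteq># label_mset c"
      using LNode.IH c by simp
    also have "label_mset c \<subseteq># (\<Sum>c\<in>#M. label_mset c)"
      using c(1) by (metis insert_DiffM mset_subset_eq_add_left sum_mset.insert)
    finally show ?thesis
      by (simp add: subset_mset.order_trans)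
  qed simp
qed

lemma psize_shape: "psize (shape s) = lsize s"
  by (induction s) (auto simp: multiset.map_comp o_def intro!: arg_cong[where f = sum_mset] image_mset_cong)

lemma increasing_LNode_iff: "increasing (LNode a M) \<longleftrightarrow> (\<forall>c\<in>#M. a < lroot c \<and> increasing c)"
  by (subst increasing.simps) auto

lemma lroot_le_label: "increasing t \<Longrightarrow> y \<in># label_mset t \<Longrightarrow> lroot t \<le> y"
  by (induction t arbitrary: y) (force simp: increasing_LNode_iff)

lemma rec_trees_iff: "r \<in> rec_trees n \<longleftrightarrow> label_mset r = mset_set {1..n} \<and> increasing r"
proof -
  have "lsize r = n \<and> labels r = {1..n} \<longleftrightarrow> label_mset r = mset_set {1..n}"
  proof
    assume size_set: "lsize r = n \<and> labels r = {1..n}"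
    then have sub: "mset_set {1..n} \<subseteq># label_mset r"
      using mset_set_set_mset_msubset[of "label_mset r"] by (simp add: set_label_mset)
    with size_set have "label_mset r - mset_set {1..n} = {#}"
      by (simp add: size_Diff_submset size_label_mset flip: size_eq_0_iff_empty)
    with sub show "label_mset r = mset_set {1..n}"
      by (simp add: subset_mset.antisym flip: Diff_eq_empty_iff_mset)
  qed (simp flip: size_label_mset set_label_mset)
  then show ?thesis
    unfolding rec_trees_def by blast
qed

section \<open>Growing a recursive tree by one node\<close>

primrec attach_leaf :: "nat \<Rightarrow> nat \<Rightarrow> ltree \<Rightarrow> ltree" where
  "attach_leaf x j (LNode a M) =
     LNode a ((if a = j then {#LNode x {#}#} else {#}) + image_mset (attach_leaf x j) M)"

primrec prune :: "nat \<Rightarrow> ltree \<Rightarrow> ltree" where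
  "prune x (LNode a M) = LNode a {#c \<in># image_mset (prune x) M. lroot c \<noteq> x#}"

primrec parent_labels :: "nat \<Rightarrow> ltree \<Rightarrow> nat set" where
  "parent_labels x (LNode a M) =
     (if x \<in> lroot ` set_mset M then {a} else {}) \<union> \<Union> (set_mset (image_mset (parent_labels x) M))"

lemma lroot_attach_leaf [simp]: "lroot (attach_leaf x j t) = lroot t"
  by (cases t) auto

lemma lroot_prune [simp]: "lroot (prune x t) = lroot t"
  by (cases t) auto

lemma label_mset_attach_leaf:
  "label_mset (attach_leaf x j t) = label_mset t + replicate_mset (count (label_mset t) j) x"
proof (induction t)
  case (LNode a M)
  then have "(\<Sum>c\<in>#M. label_mset (attach_leaf x j c))
      = (\<Sum>c\<in>#M. label_mset c + replicate_mset (count (label_mset c) j) x)"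
    by (metis (mono_tags, lifting) image_mset_cong)
  also have "\<dots> = (\<Sum>c\<in>#M. label_mset c) + replicate_mset (\<Sum>c\<in>#M. count (label_mset c) j) x"
    by (induction M) (simp_all add: replicate_mset_add)
  finally show ?case
    by (simp add: count_sum_mset replicate_mset_add multiset.map_comp o_def)
qed

lemma lsize_attach_leaf: "lsize (attach_leaf x j t) = lsize t + count (label_mset t) j"
  using label_mset_attach_leaf[of x j t] by (metis size_label_mset size_replicate_mset size_union)

lemma fringe_mset_attach_leaf:
  "fringe_mset (attach_leaf x j t) =
     image_mset (attach_leaf x j) (fringe_mset t) + replicate_mset (count (label_mset t) j) (LNode x {#})"
proof (induction t)
  case (LNode a M)
  then have "(\<Sum>c\<in>#M. fringe_mset (attach_leaf x j c))
      = (\<Sum>c\<in>#M. image_mset (attach_leaf x j) (fringe_mset c)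
                    + replicate_mset (count (label_mset c) j) (LNode x {#}))"
    by (metis (mono_tags, lifting) image_mset_cong)
  also have "\<dots> = image_mset (attach_leaf x j) (\<Sum>c\<in>#M. fringe_mset c)
                   + replicate_mset (\<Sum>c\<in>#M. count (label_mset c) j) (LNode x {#})"
    by (induction M) (simp_all add: replicate_mset_add)
  finally show ?case
    by (simp add: count_sum_mset replicate_mset_add multiset.map_comp o_def)
qed

lemma increasing_attach_leaf: "increasing t \<Longrightarrow> j < x \<Longrightarrow> increasing (attach_leaf x j t)"
  by (induction t) (auto simp: increasing_LNode_iff)

lemma increasing_prune: "increasing t \<Longrightarrow> increasing (prune x t)"
  by (induction t) (auto simp: increasing_LNode_iff)

lemma attach_leaf_id: "j \<notin># label_mset t \<Longrightarrow> attach_leaf x j t = t"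
proof (induction t)
  case (LNode a M)
  then have "image_mset (attach_leaf x j) M = M"
    by (auto intro!: image_mset_cong[where g = id, simplified])
  with LNode.prems show ?case
    by simp
qed

lemma children_lroot_neq: "x \<notin># label_mset (LNode a M) \<Longrightarrow> \<forall>c\<in>#M. lroot c \<noteq> x"
  using lroot_in_label_mset by fastforce

lemma prune_id: "x \<notin># label_mset t \<Longrightarrow> prune x t = t"
proof (induction t)
  case (LNode a M)
  then have "image_mset (prune x) M = M"
    by (auto intro!: image_mset_cong[where g = id, simplified])
  with children_lroot_neq[OF LNode.prems] show ?case
    by (simp add: filter_mset_eq_conv)
qed

lemma prune_attach_leaf: "x \<notin># label_mset t \<Longrightarrow> prune x (attach_leaf x j t) = t"
proof (induction t)
  case (LNode a M)
  then have "image_mset (prune x \<circ> attach_leaf x j) M = M"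
    by (auto intro!: image_mset_cong[where g = id, simplified])
  with children_lroot_neq[OF LNode.prems] show ?case
    by (auto simp: filter_mset_eq_conv multiset.map_comp)
qed

lemma parent_labels_attach_leaf:
  "x \<notin># label_mset t \<Longrightarrow> parent_labels x (attach_leaf x j t) = (if j \<in># label_mset t then {j} else {})"
proof (induction t)
  case (LNode a M)
  have "x \<in> lroot ` set_mset ((if a = j then {#LNode x {#}#} else {#}) + image_mset (attach_leaf x j) M)
          \<longleftrightarrow> a = j"
    using children_lroot_neq[OF LNode.prems] by (auto simp: image_iff)
  moreover have "(\<Union>c\<in>set_mset M. parent_labels x (attach_leaf x j c))
                   = (if \<exists>c\<in>#M. j \<in># label_mset c then {j} else {})"
    using LNode by auto
  ultimately show ?case
    by auto
qed

lemma label_mset_prune_subset: "label_mset (prune x t) \<subseteq># label_mset t"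
proof (induction t)
  case (LNode a M)
  have "(\<Sum>c\<in>#{#c \<in># image_mset (prune x) M. lroot c \<noteq> x#}. label_mset c)
          \<subseteq># (\<Sum>c\<in>#image_mset (prune x) M. label_mset c)"
    by (rule sum_mset_image_mset_mono_strong) simp_all
  also have "\<dots> = (\<Sum>c\<in>#M. label_mset (prune x c))"
    by (simp add: multiset.map_comp o_def)
  also have "\<dots> \<subseteq># (\<Sum>c\<in>#M. label_mset c)"
    using LNode.IH by (intro sum_mset_image_mset_mono_strong) auto
  finally show ?case
    by simp
qed

lemma increasing_root_max_leaf:
  assumes "increasing (LNode x N)" and "\<forall>y\<in>#label_mset (LNode x N). y \<le> x"
  shows "N = {#}"
proof (rule ccontr)
  assume "N \<noteq> {#}"
  then obtain d where "d \<in># N"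
    by blast
  with assms show False
    using lroot_in_label_mset[of d] by (force simp: increasing_LNode_iff)
qed

lemma ex_attach_leaf_prune:
  assumes "increasing t" and "\<forall>y. count (label_mset t) y \<le> 1"
    and "x \<in># label_mset t" and "x \<noteq> lroot t" and "\<forall>y\<in>#label_mset t. y \<le> x"
  shows "\<exists>j. j \<in># label_mset (prune x t) \<and> t = attach_leaf x j (prune x t)"
  using assms
proof (induction t rule: ltree.induct)
  case (LNode a M)
  from LNode.prems(3,4) obtain c where c: "c \<in># M" "x \<in># label_mset c"
    by auto
  define M0 where "M0 = M - {#c#}"
  have M: "M = add_mset c M0"
    using c(1) M0_def by simp
  define L0 where "L0 = (\<Sum>d\<in>#M0. label_mset d)"
  have "\<forall>y. count (add_mset a (label_mset c + L0)) y \<le> 1"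
    using LNode.prems(2) by (simp add: M L0_def)
  note distinct = count_le_1_add_mset_union[OF this]
  have x_notin_M0: "\<forall>d\<in>#M0. x \<notin># label_mset d"
    using distinct(3) c(2) unfolding L0_def by auto
  then have prune_M0: "image_mset (prune x) M0 = M0"
    using prune_id by (auto intro!: image_mset_cong[where g = id, simplified])
  have roots_M0: "\<forall>d\<in>#M0. lroot d \<noteq> x"
    using x_notin_M0 lroot_in_label_mset by metis
  have c_increasing: "increasing c"
    using LNode.prems(1) c(1) by (simp add: increasing_LNode_iff)
  have c_max: "\<forall>y\<in>#label_mset c. y \<le> x"
    using LNode.prems(5) c(1) by (auto simp: M)
  show ?case
  proof (cases "lroot c = x")
    case True
    then obtain N where "c = LNode x N"
      by (cases c) simp
    with c_increasing c_max have "c = LNode x {#}"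
      using increasing_root_max_leaf by blast
    then have "prune x (LNode a M) = LNode a M0"
      using M prune_M0 roots_M0 by (auto simp: filter_mset_eq_conv)
    moreover have "image_mset (attach_leaf x a) M0 = M0"
      using distinct(2) attach_leaf_id unfolding L0_def by (auto intro!: image_mset_cong[where g = id, simplified])
    ultimately show ?thesis
      using M \<open>c = LNode x {#}\<close> by (intro exI[of _ a]) simp
  next
    case False
    with LNode.IH[OF c(1) c_increasing _ c(2)] c_max distinct(4)
    obtain j where j: "j \<in># label_mset (prune x c)" "c = attach_leaf x j (prune x c)"
      by blast
    have "j \<in># label_mset c"
      using mset_subset_eqD[OF label_mset_prune_subset j(1)] .
    then have "a \<noteq> j" and "image_mset (attach_leaf x j) M0 = M0"
      using distinct(1,3) attach_leaf_id unfolding L0_def by (auto intro!: image_mset_cong[where g = id, simplified])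
    moreover have "prune x (LNode a M) = LNode a (add_mset (prune x c) M0)"
      using M prune_M0 roots_M0 False by (auto simp: filter_mset_eq_conv)
    ultimately show ?thesis
      using j M by (intro exI[of _ j]) auto
  qed
qed

lemma rec_trees_0: "rec_trees 0 = {}"
proof -
  have "r \<notin> rec_trees 0" for r
    using lroot_in_label_mset[of r] by (auto simp: rec_trees_iff)
  then show ?thesis
    by blast
qed

lemma rec_trees_1: "rec_trees (Suc 0) = {LNode 1 {#}}"
proof
  show "rec_trees (Suc 0) \<subseteq> {LNode 1 {#}}"
  proof
    fix r assume "r \<in> rec_trees (Suc 0)"
    moreover obtain a M where r: "r = LNode a M"
      by (cases r)
    ultimately have "a = 1" and empty: "\<forall>c\<in>#M. label_mset c = {#}"
      by (simp_all add: rec_trees_iff)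
    have "M = {#}"
    proof (rule ccontr)
      assume "M \<noteq> {#}"
      then obtain c where "c \<in># M"
        by blast
      with empty lroot_in_label_mset[of c] show False
        by simp
    qed
    with r \<open>a = 1\<close> show "r \<in> {LNode 1 {#}}"
      by simp
  qed
qed (simp add: rec_trees_iff increasing_LNode_iff)

lemma attach_leaf_in_rec_trees:
  assumes "r \<in> rec_trees n" and "j \<in> {1..n}"
  shows "attach_leaf (Suc n) j r \<in> rec_trees (Suc n)"
  using assms
  by (auto simp: rec_trees_iff label_mset_attach_leaf atLeastAtMostSuc_conv intro!: increasing_attach_leaf)

lemma inj_on_attach_leaf: "inj_on (\<lambda>(r, j). attach_leaf (Suc n) j r) (rec_trees n \<times> {1..n})"
proof (rule inj_onI, clarify)
  fix r j r' j'
  assume "r \<in> rec_trees n" "r' \<in> rec_trees n" "j \<in> {1..n}" "j' \<in> {1..n}"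
  then have new: "Suc n \<notin># label_mset r" "Suc n \<notin># label_mset r'"
    and old: "j \<in># label_mset r" "j' \<in># label_mset r'"
    by (simp_all add: rec_trees_iff)
  assume eq: "attach_leaf (Suc n) j r = attach_leaf (Suc n) j' r'"
  have "r = r'"
    using prune_attach_leaf[OF new(1), of j] prune_attach_leaf[OF new(2), of j'] eq by simp
  moreover have "{j} = {j'}"
    using parent_labels_attach_leaf[OF new(1), of j] parent_labels_attach_leaf[OF new(2), of j'] eq old
    by simp
  ultimately show "r = r' \<and> j = j'"
    by simp
qed

lemma rec_trees_Suc_prune:
  assumes "n \<ge> 1" and "t \<in> rec_trees (Suc n)"
  obtains j where "prune (Suc n) t \<in> rec_trees n" and "j \<in> {1..n}"
    and "t = attach_leaf (Suc n) j (prune (Suc n) t)"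
proof -
  from assms(2) have labels_t: "label_mset t = mset_set {1..Suc n}" and increasing_t: "increasing t"
    by (simp_all add: rec_trees_iff)
  have "lroot t \<le> 1"
    using lroot_le_label[OF increasing_t, of 1] labels_t by simp
  with assms(1) have "Suc n \<noteq> lroot t"
    by simp
  moreover have "\<forall>y. count (label_mset t) y \<le> 1"
    using labels_t by (simp add: count_mset_set')
  moreover have "Suc n \<in># label_mset t" and "\<forall>y\<in>#label_mset t. y \<le> Suc n"
    using labels_t by simp_all
  ultimately obtain j where
    j: "j \<in># label_mset (prune (Suc n) t)" "t = attach_leaf (Suc n) j (prune (Suc n) t)"
    using ex_attach_leaf_prune[OF increasing_t] by blast
  define D where "D = label_mset (prune (Suc n) t)"
  have labels_D: "label_mset t = D + replicate_mset (count D j) (Suc n)"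
    unfolding D_def by (subst j(2)) (rule label_mset_attach_leaf)
  have "count (label_mset t) (Suc n) = 1"
    using labels_t by simp
  with labels_D have "count D (Suc n) + count D j = 1"
    by simp
  moreover have "count D j \<ge> 1"
    using j(1) by (simp add: D_def Suc_le_eq)
  ultimately have "count D j = 1"
    by linarith
  with labels_D labels_t have "D = mset_set {1..n}"
    by (simp add: atLeastAtMostSuc_conv)
  with j increasing_prune[OF increasing_t] show ?thesis
    by (intro that[of j]) (simp_all add: D_def rec_trees_iff)
qed

lemma rec_trees_Suc:
  assumes "n \<ge> 1"
  shows "rec_trees (Suc n) = (\<lambda>(r, j). attach_leaf (Suc n) j r) ` (rec_trees n \<times> {1..n})"
proof
  show "(\<lambda>(r, j). attach_leaf (Suc n) j r) ` (rec_trees n \<times> {1..n}) \<subseteq> rec_trees (Suc n)"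
    using attach_leaf_in_rec_trees by auto
  show "rec_trees (Suc n) \<subseteq> (\<lambda>(r, j). attach_leaf (Suc n) j r) ` (rec_trees n \<times> {1..n})"
  proof
    fix t assume "t \<in> rec_trees (Suc n)"
    with assms obtain j where "(prune (Suc n) t, j) \<in> rec_trees n \<times> {1..n}"
      and "t = attach_leaf (Suc n) j (prune (Suc n) t)"
      by (metis mem_Sigma_iff rec_trees_Suc_prune)
    then show "t \<in> (\<lambda>(r, j). attach_leaf (Suc n) j r) ` (rec_trees n \<times> {1..n})"
      by (metis (no_types, lifting) case_prod_conv rev_image_eqI)
  qed
qed

lemma finite_rec_trees: "finite (rec_trees n)"
proof (induction n)
  case (Suc n)
  then show ?case
    by (cases "n = 0") (simp_all add: rec_trees_1 rec_trees_Suc)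
qed (simp add: rec_trees_0)

lemma card_rec_trees: "n \<ge> 1 \<Longrightarrow> card (rec_trees n) = fact (n - 1)"
proof (induction n rule: dec_induct)
  case (step n)
  have "card (rec_trees (Suc n)) = card (rec_trees n \<times> {1..n})"
    using rec_trees_Suc[OF step(1)] card_image[OF inj_on_attach_leaf] by simp
  also have "\<dots> = fact n"
    using step by (simp add: card_cartesian_product fact_reduce[of n])
  finally show ?case
    by simp
qed (simp add: rec_trees_1)

section \<open>Expected number of fringe subtrees\<close>

definition fringe_weight :: "nat \<Rightarrow> (nat \<Rightarrow> real) \<Rightarrow> real" where
  "fringe_weight n h = (\<Sum>r\<in>rec_trees n. \<Sum>s\<in>#fringe_mset r. h (lsize s))"

lemma label_mset_fringe_rec_trees:
  assumes "r \<in> rec_trees n" and "s \<in># fringe_mset r"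
  shows "label_mset s = mset_set (set_mset (label_mset s))" and "set_mset (label_mset s) \<subseteq> {1..n}"
proof -
  have "label_mset s \<subseteq># mset_set {1..n}"
    using label_mset_fringe_subset[OF assms(2)] assms(1) by (simp add: rec_trees_iff)
  then show "label_mset s = mset_set (set_mset (label_mset s))" and "set_mset (label_mset s) \<subseteq> {1..n}"
    using subset_mset_set_eq_mset_set set_mset_mono by fastforce+
qed

lemma lsize_fringe_rec_trees:
  assumes "r \<in> rec_trees n" and "s \<in># fringe_mset r"
  shows "1 \<le> lsize s" and "lsize s \<le> n"
proof -
  have "lsize s \<le> lsize r"
    using size_mset_mono[OF label_mset_fringe_subset[OF assms(2)]] by (simp add: size_label_mset)
  with assms(1) show "lsize s \<le> n"
    by (simp add: rec_trees_def)
  have "label_mset s \<noteq> {#}"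
    using lroot_in_label_mset[of s] by auto
  then show "1 \<le> lsize s"
    by (simp add: Suc_le_eq nonempty_has_size flip: size_label_mset)
qed

lemma sum_fringe_attach_leaf_at:
  fixes h :: "nat \<Rightarrow> real"
  assumes r: "r \<in> rec_trees n" and j: "j \<in> {1..n}"
  shows "(\<Sum>s\<in>#fringe_mset (attach_leaf (Suc n) j r). h (lsize s))
       = (\<Sum>s\<in>#fringe_mset r. h (lsize s + of_bool (j \<in># label_mset s))) + h 1"
proof -
  have "count (label_mset r) j = 1"
    using j r by (simp add: rec_trees_iff)
  then have "(\<Sum>s\<in>#fringe_mset (attach_leaf (Suc n) j r). h (lsize s))
      = (\<Sum>s\<in>#fringe_mset r. h (lsize (attach_leaf (Suc n) j s))) + h 1"
    by (simp add: fringe_mset_attach_leaf multiset.map_comp o_def)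
  also have "(\<Sum>s\<in>#fringe_mset r. h (lsize (attach_leaf (Suc n) j s)))
      = (\<Sum>s\<in>#fringe_mset r. h (lsize s + of_bool (j \<in># label_mset s)))"
  proof (intro arg_cong[where f = sum_mset] image_mset_cong)
    fix s assume "s \<in># fringe_mset r"
    then have "count (label_mset s) j = of_bool (j \<in># label_mset s)"
      using label_mset_fringe_rec_trees(1)[OF r] by (metis count_mset_set(1,3) finite_set_mset of_bool_def)
    then show "h (lsize (attach_leaf (Suc n) j s)) = h (lsize s + of_bool (j \<in># label_mset s))"
      by (simp add: lsize_attach_leaf)
  qed
  finally show ?thesis .
qed

text \<open>A fringe subtree of size k grows for exactly k of the n possible parents of the new leaf.\<close>

lemma sum_fringe_attach_leaf:
  fixes h :: "nat \<Rightarrow> real"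
  assumes r: "r \<in> rec_trees n"
  shows "(\<Sum>j\<in>{1..n}. \<Sum>s\<in>#fringe_mset (attach_leaf (Suc n) j r). h (lsize s))
       = (\<Sum>s\<in>#fringe_mset r. lsize s * h (lsize s + 1) + (real n - lsize s) * h (lsize s)) + n * h 1"
proof -
  have "(\<Sum>j\<in>{1..n}. \<Sum>s\<in>#fringe_mset (attach_leaf (Suc n) j r). h (lsize s))
     = (\<Sum>s\<in>#fringe_mset r. \<Sum>j\<in>{1..n}. h (lsize s + of_bool (j \<in># label_mset s))) + n * h 1"
    using sum_fringe_attach_leaf_at[OF r] by (simp add: sum.distrib sum_sum_mset_swap)
  also have "\<dots> = (\<Sum>s\<in>#fringe_mset r. lsize s * h (lsize s + 1) + (real n - lsize s) * h (lsize s)) + n * h 1"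
  proof -
    have "card (set_mset (label_mset s)) = lsize s" if "s \<in># fringe_mset r" for s
      using label_mset_fringe_rec_trees(1)[OF r that] by (metis size_label_mset size_mset_set)
    then show ?thesis
      using label_mset_fringe_rec_trees(2)[OF r] sum_of_bool_shift[of "{1..n}", where f = h]
      by (simp cong: image_mset_cong)
  qed
  finally show ?thesis .
qed

lemma fringe_weight_Suc:
  fixes h :: "nat \<Rightarrow> real"
  assumes "n \<ge> 1"
  shows "fringe_weight (Suc n) h
       = fringe_weight n (\<lambda>k. k * h (k + 1) + (real n - k) * h k) + fact (n - 1) * real n * h 1"
proof -
  let ?F = "\<lambda>t. \<Sum>s\<in>#fringe_mset t. h (lsize s)"
  have "fringe_weight (Suc n) h = (\<Sum>(r, j)\<in>rec_trees n \<times> {1..n}. ?F (attach_leaf (Suc n) j r))"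
    unfolding fringe_weight_def rec_trees_Suc[OF assms]
    by (subst sum.reindex[OF inj_on_attach_leaf]) (simp add: case_prod_unfold)
  also have "\<dots> = (\<Sum>r\<in>rec_trees n. \<Sum>j\<in>{1..n}. ?F (attach_leaf (Suc n) j r))"
    by (rule sum.cartesian_product[symmetric])
  also have "\<dots> = (\<Sum>r\<in>rec_trees n. (\<Sum>s\<in>#fringe_mset r.
                     lsize s * h (lsize s + 1) + (real n - lsize s) * h (lsize s)) + n * h 1)"
    by (rule sum.cong[OF refl]) (rule sum_fringe_attach_leaf)
  also have "\<dots> = fringe_weight n (\<lambda>k. k * h (k + 1) + (real n - k) * h k) + fact (n - 1) * real n * h 1"
    using assms by (simp add: fringe_weight_def sum.distrib card_rec_trees)
  finally show ?thesis .
qed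

lemma fringe_weight_cong:
  "(\<And>k. 1 \<le> k \<Longrightarrow> k \<le> n \<Longrightarrow> g k = h k) \<Longrightarrow> fringe_weight n g = fringe_weight n h"
  unfolding fringe_weight_def
  by (intro sum.cong refl arg_cong[where f = sum_mset] image_mset_cong) (metis lsize_fringe_rec_trees)

lemma fringe_weight_linear:
  "fringe_weight n (\<lambda>k. a * g k + b * h k) = a * fringe_weight n g + b * fringe_weight n h"
  by (simp add: fringe_weight_def sum.distrib sum_distrib_left sum_mset_distrib_left sum_mset.distrib)

lemma fringe_weight_sum:
  "finite A \<Longrightarrow> fringe_weight n (\<lambda>k. \<Sum>m\<in>A. h m k) = (\<Sum>m\<in>A. fringe_weight n (h m))"
  unfolding fringe_weight_def by (simp add: sum_sum_mset_swap flip: sum.swap[of _ A])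

text \<open>The expected number of fringe subtrees of size m of a uniformly random recursive tree of size n.\<close>

definition mean_fringe_count :: "nat \<Rightarrow> nat \<Rightarrow> real" where
  "mean_fringe_count n m =
     (if m = 0 \<or> n < m then 0 else if m = n then 1 else real n / (real m * (real m + 1)))"

lemma mean_fringe_count_Suc:
  assumes "n \<ge> 1" and "m \<ge> 1"
  shows "(real m - 1) * mean_fringe_count n (m - 1) + (real n - m) * mean_fringe_count n m
           + n * of_bool (m = 1)
         = n * mean_fringe_count (Suc n) m"
proof -
  consider "m = 1" | "2 \<le> m" "m < n" | "2 \<le> m" "m = n" | "m = Suc n" | "Suc n < m"
    using assms(2) by linarith
  then show ?thesis
  proof cases
    case 1
    with assms(1) show ?thesis
      by (cases "n = 1") (simp_all add: mean_fringe_count_def field_simps)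
  next
    case 2
    then have "real m \<ge> 2"
      by simp
    with 2 show ?thesis
      by (auto simp: mean_fringe_count_def divide_simps) (simp add: algebra_simps)
  next
    case 3
    then have "real m \<ge> 2"
      by simp
    with 3 show ?thesis
      by (auto simp: mean_fringe_count_def divide_simps)
  qed (simp_all add: mean_fringe_count_def)
qed

lemma fringe_weight_zero: "fringe_weight n (\<lambda>k. 0) = 0"
  by (simp add: fringe_weight_def)

lemma fringe_weight_Suc_0: "fringe_weight (Suc 0) h = h 1"
  by (simp add: fringe_weight_def rec_trees_1)

lemma fringe_weight_indicator:
  "n \<ge> 1 \<Longrightarrow> fringe_weight n (\<lambda>k. of_bool (k = m)) = fact (n - 1) * mean_fringe_count n m"
proof (induction n arbitrary: m rule: dec_induct)
  case base
  then show ?case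
    by (simp add: fringe_weight_Suc_0 mean_fringe_count_def)
next
  case (step n)
  show ?case
  proof (cases "m = 0")
    case True
    have "fringe_weight (Suc n) (\<lambda>k. of_bool (k = m)) = fringe_weight (Suc n) (\<lambda>k. 0)"
      using True by (intro fringe_weight_cong) auto
    with True show ?thesis
      by (simp add: fringe_weight_zero mean_fringe_count_def)
  next
    case False
    have "(\<lambda>k. k * of_bool (k + 1 = m) + (real n - k) * of_bool (k = m))
        = (\<lambda>k. (real m - 1) * of_bool (k = m - 1) + (real n - m) * of_bool (k = m))"
      using False by (auto simp: fun_eq_iff)
    then have "fringe_weight (Suc n) (\<lambda>k. of_bool (k = m))
        = (real m - 1) * fringe_weight n (\<lambda>k. of_bool (k = m - 1))
          + (real n - m) * fringe_weight n (\<lambda>k. of_bool (k = m)) + fact (n - 1) * real n * of_bool (1 = m)"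
      using fringe_weight_Suc[OF step(1), of "\<lambda>k. of_bool (k = m)"] by (simp add: fringe_weight_linear)
    also have "\<dots> = fact (n - 1) * ((real m - 1) * mean_fringe_count n (m - 1)
                       + (real n - m) * mean_fringe_count n m + real n * of_bool (m = 1))"
      using step(3) by (simp add: algebra_simps eq_commute[of 1 m])
    also have "\<dots> = fact (n - 1) * (n * mean_fringe_count (Suc n) m)"
      using mean_fringe_count_Suc[OF step(1)] False by simp
    also have "\<dots> = fact n * mean_fringe_count (Suc n) m"
      using step(1) by (simp add: fact_reduce[of n])
    finally show ?thesis
      by simp
  qed
qed

lemma sum_mean_fringe_count_tail:
  assumes "1 \<le> L" and "L \<le> n"
  shows "(\<Sum>m=L..n. mean_fringe_count n m) = n / L"
  using assms(2)
proof (induction L rule: inc_induct)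
  case base
  with assms show ?case
    by (simp add: mean_fringe_count_def)
next
  case (step l)
  have "(\<Sum>m=l..n. mean_fringe_count n m) = mean_fringe_count n l + (\<Sum>m=Suc l..n. mean_fringe_count n m)"
    using step(2) by (simp add: sum.atLeast_Suc_atMost)
  also have "\<dots> = real n / (real l * (real l + 1)) + real n / (real l + 1)"
    using step assms(1) by (simp add: mean_fringe_count_def)
  also have "\<dots> = n / l"
  proof -
    have "real l \<ge> 1"
      using step(1) assms(1) by simp
    then show ?thesis
      by (simp add: divide_simps) (simp add: algebra_simps)
  qed
  finally show ?case .
qed

lemma fringe_weight_lsize_ge:
  assumes "n \<ge> 1" and "L \<ge> 1"
  shows "fringe_weight n (\<lambda>k. of_bool (L \<le> k)) \<le> fact (n - 1) * (n / L)"
proof (cases "L \<le> n")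
  case True
  have "fringe_weight n (\<lambda>k. of_bool (L \<le> k)) = fringe_weight n (\<lambda>k. \<Sum>m=L..n. of_bool (k = m))"
    by (rule fringe_weight_cong) auto
  also have "\<dots> = (\<Sum>m=L..n. fringe_weight n (\<lambda>k. of_bool (k = m)))"
    by (rule fringe_weight_sum) simp
  also have "\<dots> = fact (n - 1) * (n / L)"
    using True assms
    by (simp add: fringe_weight_indicator sum_mean_fringe_count_tail flip: sum_distrib_left)
  finally show ?thesis
    by simp
next
  case False
  then have "fringe_weight n (\<lambda>k. of_bool (L \<le> k)) = fringe_weight n (\<lambda>k. 0)"
    by (intro fringe_weight_cong) auto
  then show ?thesis
    by (simp add: fringe_weight_zero)
qed

lemma one_minus_S_coeff_div_T_coeff:
  assumes "n \<ge> 1"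
  shows "1 - S_coeff t n / T_coeff n
       = card {r \<in> rec_trees n. \<exists>s. fringe r s \<and> shape s = t} / fact (n - 1)"
proof -
  let ?R = "rec_trees n" and ?has_t = "\<lambda>r. \<exists>s. fringe r s \<and> shape s = t"
  define with_t where "with_t = real (card {r \<in> ?R. ?has_t r})"
  define without_t where "without_t = real (card {r \<in> ?R. \<not> ?has_t r})"
  have "card ?R = card {r \<in> ?R. \<not> ?has_t r} + card {r \<in> ?R. ?has_t r}"
    using finite_rec_trees[of n] by (subst card_Un_disjoint[symmetric]) (auto intro: arg_cong[where f = card])
  then have "real (card ?R) = without_t + with_t"
    unfolding with_t_def without_t_def by (simp flip: of_nat_add)
  moreover have "real (card ?R) = fact (n - 1)"
    using card_rec_trees[OF assms] by simp
  moreover have "S_coeff t n / T_coeff n = without_t / fact (n - 1)"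
    unfolding S_coeff_def T_coeff_def without_t_def using card_rec_trees[OF assms] by simp
  moreover have "(fact (n - 1) :: real) \<noteq> 0"
    by simp
  ultimately show ?thesis
    unfolding with_t_def[symmetric] by (simp add: field_simps)
qed

lemma sum_has_fringe_shape_le:
  assumes "finite P" and "\<forall>t\<in>P. L \<le> psize t"
  shows "(\<Sum>t\<in>P. of_bool (\<exists>s. fringe r s \<and> shape s = t))
         \<le> (\<Sum>s\<in>#fringe_mset r. of_bool (L \<le> lsize s) :: real)"
proof -
  let ?large = "{#s \<in># fringe_mset r. L \<le> lsize s#}"
  have "{t \<in> P. \<exists>s. fringe r s \<and> shape s = t} \<subseteq> shape ` set_mset ?large"
    using assms(2) by (auto simp: fringe_iff_in_fringe_mset psize_shape)
  then have "card {t \<in> P. \<exists>s. fringe r s \<and> shape s = t} \<le> card (shape ` set_mset ?large)"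
    by (rule card_mono[rotated]) simp
  also have "\<dots> \<le> card (set_mset ?large)"
    by (rule card_image_le) simp
  also have "\<dots> \<le> size ?large"
    by (rule card_set_mset_le_size)
  finally show ?thesis
    using assms(1) by (simp add: Int_def flip: of_nat_size_filter_mset)
qed

lemma sum_fringe_shape_prob_le:
  assumes "n \<ge> 1" and "L \<ge> 1" and "\<forall>t\<in>P. L \<le> psize t"
  shows "(\<Sum>t\<in>P. 1 - S_coeff t n / T_coeff n) \<le> n / L"
proof (cases "finite P")
  case True
  let ?has_t = "\<lambda>r t. \<exists>s. fringe r s \<and> shape s = t"
  have "(\<Sum>t\<in>P. 1 - S_coeff t n / T_coeff n)
        = (\<Sum>t\<in>P. \<Sum>r\<in>rec_trees n. of_bool (?has_t r t)) / fact (n - 1)"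
    using assms(1) finite_rec_trees[of n]
    by (simp add: one_minus_S_coeff_div_T_coeff sum_divide_distrib Int_def)
  also have "\<dots> = (\<Sum>r\<in>rec_trees n. \<Sum>t\<in>P. of_bool (?has_t r t)) / fact (n - 1)"
    by (subst sum.swap) (rule refl)
  also have "\<dots> \<le> fringe_weight n (\<lambda>k. of_bool (L \<le> k)) / fact (n - 1)"
    unfolding fringe_weight_def
    by (intro divide_right_mono sum_mono sum_has_fringe_shape_le True assms(3)) simp
  also have "\<dots> \<le> n / L"
    using fringe_weight_lsize_ge[OF assms(1,2)] by (simp add: divide_le_eq mult.commute)
  finally show ?thesis .
qed simp

section \<open>The radius of convergence of Polya trees\<close>

text \<open>The children are listed in an arbitrary order, yet the code is injective because it is prefix-free.\<close>

primrec ptree_code :: "ptree \<Rightarrow> bool list" where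
  "ptree_code (PNode M) = True # concat (list_of_mset (image_mset ptree_code M)) @ [False]"

lemma length_ptree_code: "length (ptree_code t) = 2 * psize t"
proof (induction t)
  case (PNode M)
  have "length (concat (list_of_mset (image_mset ptree_code M))) = (\<Sum>c\<in>#M. length (ptree_code c))"
    by (simp add: length_concat sum_mset_sum_list[symmetric] multiset.map_comp o_def)
  also have "\<dots> = 2 * (\<Sum>c\<in>#M. psize c)"
    using PNode.IH by (simp add: sum_mset_distrib_left cong: image_mset_cong)
  finally show ?case
    by simp
qed

lemma ptree_code_Cons: "\<exists>w. ptree_code t = True # w"
  by (cases t) simp

lemma ptree_code_append_eq: "ptree_code t @ r = ptree_code s @ r' \<Longrightarrow> t = s \<and> r = r'"
proof (induction t arbitrary: s r r')
  case (PNode M)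
  obtain N where s: "s = PNode N"
    by (cases s)
  let ?us = "list_of_mset (image_mset ptree_code M)" and ?vs = "list_of_mset (image_mset ptree_code N)"
  have words_us: "set ?us = ptree_code ` set_mset M" and words_vs: "set ?vs = ptree_code ` set_mset N"
    by (metis mset_list_of_mset set_mset_mset multiset.set_map)+
  have prefix_free: "\<forall>u\<in>set ?us. \<forall>v\<in>range ptree_code. \<forall>r r'. u @ r = v @ r' \<longrightarrow> u = v \<and> r = r'"
  proof (intro ballI allI impI)
    fix u v r r' assume "u \<in> set ?us" "v \<in> range ptree_code" and eq: "u @ r = v @ r'"
    then obtain c d where c: "c \<in># M" and "u = ptree_code c" "v = ptree_code d"
      using words_us by auto
    with PNode.IH[OF c, where s = d] eq show "u = v \<and> r = r'"
      by blast
  qed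
  have starts_True: "\<forall>v\<in>range ptree_code. \<exists>w. v = True # w"
    using ptree_code_Cons by blast
  have "concat ?us @ False # r = concat ?vs @ False # r'"
    using PNode.prems s by simp
  moreover have "set ?us \<subseteq> range ptree_code" and "set ?vs \<subseteq> range ptree_code"
    unfolding words_us words_vs by blast+
  ultimately have "?us = ?vs \<and> r = r'"
    using concat_code_words_eq[OF prefix_free _ _ starts_True] by blast
  then have "image_mset ptree_code M = image_mset ptree_code N" and "r = r'"
    by (metis mset_list_of_mset, simp)
  moreover have "c = d" if "c \<in># M" and "ptree_code c = ptree_code d" for c d
    using PNode.IH[OF that(1), where s = d and r = "[]" and r' = "[]"] that(2) by simp
  ultimately have "M = N"
    by (intro multiset.inj_map_strong[where f = ptree_code and fa = ptree_code])
  with s \<open>r = r'\<close> show ?case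
    by simp
qed

lemma inj_ptree_code: "inj ptree_code"
  by (rule injI) (use ptree_code_append_eq[of _ "[]" _ "[]"] in simp)

fun bits_tree :: "bool list \<Rightarrow> ptree" where
  "bits_tree [] = PNode {#}"
| "bits_tree (True # bs) = PNode {#bits_tree bs, PNode {#}#}"
| "bits_tree (False # bs) = PNode {#PNode {#bits_tree bs#}#}"

lemma psize_bits_tree: "psize (bits_tree bs) = 2 * length bs + 1"
  by (induction bs rule: bits_tree.induct) simp_all

lemma inj_bits_tree: "inj bits_tree"
proof (rule injI)
  show "bits_tree xs = bits_tree ys \<Longrightarrow> xs = ys" for xs ys
  proof (induction xs arbitrary: ys rule: bits_tree.induct)
    case 1
    then show ?case
      by (cases ys rule: bits_tree.cases) auto
  next
    case (2 bs)
    then show ?case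
      by (cases ys rule: bits_tree.cases) (auto simp: add_eq_conv_diff)
  next
    case (3 bs)
    then show ?case
      by (cases ys rule: bits_tree.cases) (auto simp: add_eq_conv_diff)
  qed
qed

lemma finite_psize_eq: "finite {t. psize t = n}"
  and card_psize_eq_le: "card {t. psize t = n} \<le> 4 ^ n"
proof -
  have code_image: "ptree_code ` {t. psize t = n} \<subseteq> {xs. length xs = 2 * n}"
    using length_ptree_code by auto
  have "finite {xs :: bool list. length xs = 2 * n}"
    by (rule finite_list_length)
  then show "finite {t. psize t = n}"
    using finite_subset[OF code_image] finite_imageD inj_ptree_code by (metis inj_on_subset subset_UNIV)
  have "card {t. psize t = n} = card (ptree_code ` {t. psize t = n})"
    using inj_ptree_code by (simp add: card_image inj_on_subset)
  also have "\<dots> \<le> card {xs :: bool list. length xs = 2 * n}"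
    by (rule card_mono[OF finite_list_length code_image])
  also have "\<dots> = 4 ^ n"
    by (simp add: card_bool_lists power_mult)
  finally show "card {t. psize t = n} \<le> 4 ^ n" .
qed

lemma card_psize_eq_odd_ge: "2 ^ k \<le> card {t. psize t = 2 * k + 1}"
proof -
  have "bits_tree ` {bs. length bs = k} \<subseteq> {t. psize t = 2 * k + 1}"
    using psize_bits_tree by auto
  moreover have "card (bits_tree ` {bs :: bool list. length bs = k}) = 2 ^ k"
    using inj_bits_tree by (simp add: card_image inj_on_subset card_bool_lists)
  ultimately show ?thesis
    by (metis card_mono finite_psize_eq)
qed

lemma conv_radius_polya_ge: "ereal (1/8) \<le> conv_radius (\<lambda>n. real (card {t. psize t = n}))"
proof -
  have "summable (\<lambda>n. real (card {t. psize t = n}) * (1/8) ^ n)"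
  proof (rule summable_comparison_test'[where g = "\<lambda>n. (1/2) ^ n"])
    show "summable (\<lambda>n. (1/2 :: real) ^ n)"
      by (rule summable_geometric) simp
    fix n :: nat
    have "real (card {t. psize t = n}) * (1/8) ^ n \<le> 4 ^ n * (1/8) ^ n"
      using card_psize_eq_le[of n] by (intro mult_right_mono) (simp_all flip: of_nat_power)
    also have "\<dots> = (1/2) ^ n"
      by (simp flip: power_mult_distrib)
    finally show "norm (real (card {t. psize t = n}) * (1/8) ^ n) \<le> (1/2) ^ n"
      by simp
  qed
  from conv_radius_geI[OF this] show ?thesis
    by simp
qed

lemma conv_radius_polya_le: "conv_radius (\<lambda>n. real (card {t. psize t = n})) \<le> ereal (3/4)"
proof -
  have "\<not> summable (\<lambda>n. real (card {t. psize t = n}) * (3/4) ^ n)"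
  proof
    assume "summable (\<lambda>n. real (card {t. psize t = n}) * (3/4) ^ n)"
    then have "(\<lambda>n. real (card {t. psize t = n}) * (3/4) ^ n) \<longlonglongrightarrow> 0"
      by (rule summable_LIMSEQ_zero)
    then obtain N where N: "\<And>n. n \<ge> N \<Longrightarrow> real (card {t. psize t = n}) * (3/4) ^ n < 3/4"
      using LIMSEQ_D[of _ 0 "3/4"] by force
    have "(3/4 :: real) \<le> (3/4) * (2 * (3/4)^2) ^ N"
      by (simp add: power2_eq_square)
    also have "\<dots> = 2 ^ N * (3/4) ^ (2 * N + 1)"
      by (simp add: power_mult power_mult_distrib)
    also have "\<dots> \<le> real (card {t. psize t = 2 * N + 1}) * (3/4) ^ (2 * N + 1)"
      using card_psize_eq_odd_ge[of N] by (intro mult_right_mono) (simp_all flip: of_nat_power)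
    finally show False
      using N[of "2 * N + 1"] by simp
  qed
  from conv_radius_leI'[OF this] show ?thesis
    by simp
qed

lemma polya_sigma_bounds: "1/8 \<le> polya_sigma" "polya_sigma \<le> 3/4"
  using conv_radius_polya_ge conv_radius_polya_le unfolding polya_sigma_def
  by (cases "conv_radius (\<lambda>n. real (card {t. psize t = n}))"; simp)+

theorem proposition2p7:
  shows "(\<lambda>n::nat. \<Sum>t\<in>{t. psize t \<le> n \<and> real (psize t) \<ge> log (1 / polya_sigma) (real n)}.
            1 - S_coeff t n / T_coeff n)
         \<in> O(\<lambda>n. real n / log (1 / polya_sigma) (real n))"
proof (rule bigoI[where c = 1], rule eventually_mono[OF eventually_ge_at_top[of 2]])
  fix n :: nat
  assume "n \<ge> 2"
  define lg where "lg = log (1 / polya_sigma) (real n)"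
  define P where "P = {t. psize t \<le> n \<and> real (psize t) \<ge> lg}"
  have "1 / polya_sigma > 1"
    using polya_sigma_bounds by simp
  with \<open>n \<ge> 2\<close> have "lg > 0"
    by (simp add: lg_def)
  then have "nat \<lceil>lg\<rceil> \<ge> 1"
    by linarith
  with \<open>n \<ge> 2\<close> have "(\<Sum>t\<in>P. 1 - S_coeff t n / T_coeff n) \<le> n / nat \<lceil>lg\<rceil>"
    by (intro sum_fringe_shape_prob_le) (auto simp: P_def)
  also have "\<dots> \<le> n / lg"
    using \<open>lg > 0\<close> by (intro divide_left_mono) auto
  moreover have "0 \<le> (\<Sum>t\<in>P. 1 - S_coeff t n / T_coeff n)"
    using \<open>n \<ge> 2\<close> by (intro sum_nonneg) (simp add: one_minus_S_coeff_div_T_coeff)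
  ultimately show "norm (\<Sum>t\<in>P. 1 - S_coeff t n / T_coeff n) \<le> 1 * norm (real n / lg)"
    using \<open>lg > 0\<close> by simp
qed

end
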